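(* Let $X=X_\Sigma$ be the toric manifold described in the context, and let $S_1$ be the torus invariant surface associated to the $(d-2)$-dimensional cone of $\Sigma$ generated by all ray generators except $v_1,y_1,z_1,t_1,u_1$. Then $$2(\mathrm{ch}_2(X)\cdot S_1)=-p_1-p_4+b_1p_2-2(c_2+\cdots+c_{p_2})-(b_1+1)+\sum_{i=2}^{p_3}\bigl(b_1-2b_i-1\bigr).$$
   Context: Let $N=\mathbb{Z}^d$ and let $\Sigma$ be a smooth projective complete fan in $N_\mathbb{R}$ whose set of primitive ray generators is $\{v_1,\dots,v_{p_0},y_1,\dots,y_{p_1},z_1,\dots,z_{p_2},t_1,\dots,t_{p_3},u_1,\dots,u_{p_4}\}$, where $p_0,\dots,p_4$ are positive integers with $p_0+p_1+p_2+p_3+p_4-3=d$. A primitive collection is a set of ray generators not generating a cone of $\Sigma$ while every proper subset does. The primitive collections of $\Sigma$ are exactly $\{v_i\}\cup\{y_j\}$, $\{y_j\}\cup\{z_j\}$, $\{z_j\}\cup\{t_j\}$, $\{t_j\}\cup\{u_j\}$, $\{u_j\}\cup\{v_j\}$ (all elements of the indicated groups), with primitive relations $v_1+\cdots+v_{p_0}+y_1+\cdots+y_{p_1}=c_2z_2+\cdots+c_{p_2}z_{p_2}+(b_1+1)t_1+\cdots+(b_{p_3}+1)t_{p_3}$, $y_1+\cdots+y_{p_1}+z_1+\cdots+z_{p_2}=u_1+\cdots+u_{p_4}$, $z_1+\cdots+z_{p_2}+t_1+\cdots+t_{p_3}=0$, $t_1+\cdots+t_{p_3}+u_1+\cdots+u_{p_4}=y_1+\cdots+y_{p_1}$,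 $u_1+\cdots+u_{p_4}+v_1+\cdots+v_{p_0}=c_2z_2+\cdots+c_{p_2}z_{p_2}+b_1t_1+\cdots+b_{p_3}t_{p_3}$, with $b_i,c_j\in\mathbb{Z}_{\ge0}$, and $c_2=\min_j c_j$, $b_1=\min_i b_i$. $X=X_\Sigma$. With $D_1,\dots,D_n$ the torus invariant prime divisors, $\mathrm{ch}_2(X)=\frac12\sum D_i^2$. *)

theory Defs
  imports "HOL-Analysis.Analysis" "HOL-Library.Multiset"
begin

text \<open>Ray generators are indexed by pairs (k, j): group k (0 = v, 1 = y, 2 = z, 3 = t, 4 = u),
  position j with 1 \<le> j \<le> p k.\<close>

definition grp :: "(nat \<Rightarrow> nat) \<Rightarrow> nat \<Rightarrow> (nat \<times> nat) set" where
  "grp p k = {(k, j) | j. 1 \<le> j \<and> j \<le> p k}"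

definition Rays :: "(nat \<Rightarrow> nat) \<Rightarrow> (nat \<times> nat) set" where
  "Rays p = (\<Union>k<5. grp p k)"

definition primcoll :: "(nat \<Rightarrow> nat) \<Rightarrow> nat \<Rightarrow> (nat \<times> nat) set" where
  "primcoll p k = grp p k \<union> grp p ((k + 1) mod 5)"

text \<open>For a simplicial fan, a set of rays spans a cone iff it contains no primitive collection.\<close>
definition is_cone :: "(nat \<Rightarrow> nat) \<Rightarrow> (nat \<times> nat) set \<Rightarrow> bool" where
  "is_cone p C \<longleftrightarrow> C \<subseteq> Rays p \<and> (\<forall>k<5. \<not> primcoll p k \<subseteq> C)"

definition rvec :: "int ^ 'n \<Rightarrow> real ^ 'n" where
  "rvec x = (\<chi> k. real_of_int (x $ k))"

definition idot :: "int ^ 'n \<Rightarrow> int ^ 'n \<Rightarrow> int" where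
  "idot u x = (\<Sum>k\<in>UNIV. u $ k * x $ k)"

definition cone_of :: "(nat \<times> nat \<Rightarrow> int ^ 'n) \<Rightarrow> (nat \<times> nat) set \<Rightarrow> (real ^ 'n) set" where
  "cone_of w C = {(\<Sum>i\<in>C. a i *\<^sub>R rvec (w i)) | a. \<forall>i\<in>C. 0 \<le> a i}"

text \<open>Geometric conditions: the cones cone(w ` C), C a cone, form a fan (pairwise intersections
  are common faces), which is complete, smooth (maximal cones are generated by a Z-basis)
  and projective (admits a strictly convex support function / ample divisor).\<close>
definition smooth_projective_complete_fan ::
  "(nat \<Rightarrow> nat) \<Rightarrow> (nat \<times> nat \<Rightarrow> int ^ 'n) \<Rightarrow> bool" where
  "smooth_projective_complete_fan p w \<longleftrightarrow>
     (\<forall>C C'. is_cone p C \<and> is_cone p C' \<longrightarrow> cone_of w C \<inter> cone_of w C' = cone_of w (C \<inter> C')) \<and>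
     (\<forall>x :: real ^ 'n. \<exists>C. is_cone p C \<and> x \<in> cone_of w C) \<and>
     (\<forall>C. is_cone p C \<and> card C = CARD('n) \<longrightarrow>
        (\<forall>x :: int ^ 'n. \<exists>a. x = (\<Sum>i\<in>C. a i *s w i)) \<and>
        (\<forall>a. (\<Sum>i\<in>C. a i *s w i) = 0 \<longrightarrow> (\<forall>i\<in>C. a i = 0))) \<and>
     (\<exists>a :: nat \<times> nat \<Rightarrow> real. \<forall>C. is_cone p C \<and> card C = CARD('n) \<longrightarrow>
        (\<exists>m :: real ^ 'n. (\<forall>i\<in>C. m \<bullet> rvec (w i) = - a i) \<and>
                          (\<forall>j\<in>Rays p - C. m \<bullet> rvec (w j) > - a j)))"

text \<open>Degree map on the top graded piece of the Chow ring
  A(X) = Z[D_i] / (Stanley-Reisner ideal + linear relations) of the smooth complete toric variety: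
  a monomial of degree d is a multiset of rays of size d.  These conditions determine the degree map uniquely.\<close>
definition toric_degree ::
  "(nat \<Rightarrow> nat) \<Rightarrow> (nat \<times> nat \<Rightarrow> int ^ 'n) \<Rightarrow> ((nat \<times> nat) multiset \<Rightarrow> int) \<Rightarrow> bool" where
  "toric_degree p w deg \<longleftrightarrow>
     (\<forall>m. size m = CARD('n) \<and> set_mset m \<subseteq> Rays p \<and> \<not> is_cone p (set_mset m) \<longrightarrow> deg m = 0) \<and>
     (\<forall>C. is_cone p C \<and> card C = CARD('n) \<longrightarrow> deg (mset_set C) = 1) \<and>
     (\<forall>m (u :: int ^ 'n). size m + 1 = CARD('n) \<and> set_mset m \<subseteq> Rays p \<longrightarrow>
        (\<Sum>i\<in>Rays p. idot u (w i) * deg (m + {#i#})) = 0)"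

end

theory Submission
  imports Defs
begin

text \<open>The surface \<open>S\<^sub>1\<close> is the cone on all rays except the first ray \<open>(k, 1)\<close> of each
  group, and \<open>isect x y\<close> below is the intersection number \<open>D\<^sub>x \<cdot> D\<^sub>y \<cdot> S\<^sub>1\<close>, so the claim is a
  formula for \<open>\<Sum>\<^sub>x isect x x\<close>.  Two distinct first rays meet \<open>S\<^sub>1\<close> with multiplicity 1 or 0
  according as they span a cone together with it or contain a primitive collection.  Every
  \<open>u \<in> M\<close> gives the linear relation \<open>\<Sum>\<^sub>l \<langle>u, w\<^sub>l\<rangle> isect x l = 0\<close>.  The rays of \<open>S\<^sub>1\<close> together
  with \<open>v\<^sub>1, z\<^sub>1\<close> form a \<open>\<int>\<close>-basis of \<open>N\<close>, so \<open>u\<close> may be prescribed on them, and the first three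
  primitive relations then fix \<open>u\<close> on \<open>y\<^sub>1, t\<^sub>1, u\<^sub>1\<close>.  Taking \<open>u\<close> zero on \<open>S\<^sub>1\<close> yields the self
  intersections of the first rays; taking \<open>u\<close> dual to a ray of \<open>S\<^sub>1\<close> expresses that ray's self
  intersection through the numbers already known.\<close>

lemma idot_add: "idot u (x + y) = idot u x + idot u y"
  by (simp add: idot_def distrib_left sum.distrib)

lemma idot_smult: "idot u (a *s x) = a * idot u x"
  by (simp add: idot_def sum_distrib_left algebra_simps)

lemma idot_zero [simp]: "idot u 0 = 0"
  by (simp add: idot_def)

lemma idot_sum: "idot u (sum f S) = (\<Sum>i\<in>S. idot u (f i))"
  by (simp add: idot_def sum_distrib_left sum.swap[of _ UNIV])

lemma exists_idot_on_basis:
  fixes w :: "'i \<Rightarrow> int ^ 'n"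
  assumes "finite C"
    and span: "\<forall>x::int ^ 'n. \<exists>a. x = (\<Sum>i\<in>C. a i *s w i)"
    and indep: "\<forall>a. (\<Sum>i\<in>C. a i *s w i) = 0 \<longrightarrow> (\<forall>i\<in>C. a i = 0)"
  shows "\<exists>u. \<forall>l\<in>C. idot u (w l) = f l"
proof -
  have "\<forall>k. \<exists>a. axis k 1 = (\<Sum>i\<in>C. a i *s w i)"
    using span by blast
  then obtain A where A: "\<And>k. axis k 1 = (\<Sum>i\<in>C. A k i *s w i)"
    by metis
  define coeff where "coeff l i = (\<Sum>k\<in>UNIV. w l $ k * A k i)" for l i
  have expand: "w l = (\<Sum>i\<in>C. coeff l i *s w i)" for l
    unfolding vec_eq_iff
  proof
    fix m
    have "w l $ m = (\<Sum>k\<in>UNIV. w l $ k * axis k 1 $ m)"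
      by (simp add: axis_def if_distrib cong: if_cong)
    also have "\<dots> = (\<Sum>i\<in>C. coeff l i * w i $ m)"
      by (simp add: A coeff_def sum_distrib_left sum_distrib_right sum.swap[of _ C] mult.assoc)
    finally show "w l $ m = (\<Sum>i\<in>C. coeff l i *s w i) $ m"
      by simp
  qed
  have coeff_delta: "coeff l i = of_bool (i = l)" if "l \<in> C" "i \<in> C" for l i
  proof -
    have "(\<Sum>i\<in>C. of_bool (i = l) *s w i) = w l"
      using \<open>finite C\<close> \<open>l \<in> C\<close> by (simp add: vec_eq_iff)
    then have "(\<Sum>i\<in>C. (coeff l i - of_bool (i = l)) *s w i) = 0"
      by (simp add: vector_sub_rdistrib sum_subtractf flip: expand)
    then show ?thesis
      using indep \<open>i \<in> C\<close> by fastforce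
  qed
  define u :: "int ^ 'n" where "u = (\<chi> k. \<Sum>i\<in>C. A k i * f i)"
  have "idot u (w l) = f l" if "l \<in> C" for l
  proof -
    have "idot u (w l) = (\<Sum>i\<in>C. f i * coeff l i)"
      by (simp add: idot_def u_def coeff_def sum_distrib_left sum_distrib_right sum.swap[of _ C]
          algebra_simps)
    also have "\<dots> = f l"
      using that \<open>finite C\<close> by (simp add: coeff_delta cong: sum.cong)
    finally show ?thesis .
  qed
  then show ?thesis
    by blast
qed

lemma all_less_5: "(\<forall>k<(5::nat). P k) \<longleftrightarrow> P 0 \<and> P 1 \<and> P 2 \<and> P 3 \<and> P 4"
  by (auto simp: less_Suc_eq eval_nat_numeral)

lemma sum_lessThan_5: "(\<Sum>k<5. f k) = f 0 + f 1 + f 2 + f 3 + f (4::nat)"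
  by (simp add: eval_nat_numeral)

lemma mem_grp: "(k, j) \<in> grp p k' \<longleftrightarrow> k = k' \<and> 1 \<le> j \<and> j \<le> p k"
  by (auto simp: grp_def)

lemma mem_Rays: "(k, j) \<in> Rays p \<longleftrightarrow> k < 5 \<and> 1 \<le> j \<and> j \<le> p k"
  by (auto simp: Rays_def grp_def)

lemma sum_grp_split:
  assumes "0 < p k"
  shows "(\<Sum>i\<in>grp p k. f i) = f (k, 1) + (\<Sum>j\<in>{2..p k}. f (k, j))"
proof -
  have "grp p k = Pair k ` {1..p k}"
    by (auto simp: grp_def)
  then have "(\<Sum>i\<in>grp p k. f i) = (\<Sum>j\<in>{1..p k}. f (k, j))"
    by (simp add: sum.reindex inj_on_def)
  also have "\<dots> = f (k, 1) + (\<Sum>j\<in>{2..p k}. f (k, j))"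
    using assms by (simp add: sum.atLeast_Suc_atMost numeral_2_eq_2)
  finally show ?thesis .
qed

definition surface_rays :: "(nat \<Rightarrow> nat) \<Rightarrow> (nat \<times> nat) set" where
  "surface_rays p = Rays p - {(k, 1) | k. k < 5}"

lemma mem_surface_rays: "(k, j) \<in> surface_rays p \<longleftrightarrow> k < 5 \<and> 2 \<le> j \<and> j \<le> p k"
  by (auto simp: surface_rays_def mem_Rays)

lemma surface_rays_subset_Rays: "surface_rays p \<subseteq> Rays p"
  by (auto simp: surface_rays_def)

lemma surface_rays_Sigma: "surface_rays p = (SIGMA k:{..<5}. {2..p k})"
  by (auto simp: mem_surface_rays)

lemma finite_surface_rays [simp]: "finite (surface_rays p)"
  by (simp add: surface_rays_Sigma)

lemma first_ray_notin_surface_rays [simp]: "(k, Suc 0) \<notin> surface_rays p"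
  by (simp add: mem_surface_rays)

lemma sum_Rays_split:
  assumes "\<forall>k<5. 0 < p k"
  shows "(\<Sum>i\<in>Rays p. f i) = (\<Sum>i\<in>surface_rays p. f i) + (\<Sum>k<5. f (k, 1))"
proof -
  have "Rays p = surface_rays p \<union> (\<lambda>k. (k, 1)) ` {..<5}"
    using assms by (auto simp: surface_rays_def mem_Rays)
  moreover have "surface_rays p \<inter> (\<lambda>k. (k, 1)) ` {..<5} = {}"
    by auto
  ultimately show ?thesis
    by (simp add: sum.union_disjoint sum.reindex inj_on_def)
qed

lemma primcoll_subset_surface_rays_Un:
  assumes "k < 5" "\<forall>k<5. 0 < p k"
  shows "primcoll p k \<subseteq> surface_rays p \<union> F \<longleftrightarrow> (k, 1) \<in> F \<and> ((k + 1) mod 5, 1) \<in> F"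
proof -
  have "(k, 1) \<in> primcoll p k" "((k + 1) mod 5, 1) \<in> primcoll p k"
    using assms by (auto simp: primcoll_def mem_grp Suc_le_eq)
  moreover have "primcoll p k \<subseteq> surface_rays p \<union> {(k, 1), ((k + 1) mod 5, 1)}"
    using assms(1) by (auto simp: primcoll_def grp_def mem_surface_rays)
  ultimately show ?thesis
    by auto
qed

lemma is_cone_surface_rays_Un:
  assumes "a < 5" "b < 5" "\<forall>k<5. 0 < p k"
  shows "is_cone p (surface_rays p \<union> {(a, 1), (b, 1)})
    \<longleftrightarrow> (\<forall>k<5. \<not> {k, (k + 1) mod 5} \<subseteq> {a, b})"
proof -
  have "surface_rays p \<union> {(a, 1), (b, 1)} \<subseteq> Rays p"
    using assms by (auto simp: surface_rays_def mem_Rays)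
  moreover have "primcoll p k \<subseteq> surface_rays p \<union> {(a, 1), (b, 1)} \<longleftrightarrow> {k, (k + 1) mod 5} \<subseteq> {a, b}"
    if "k < 5" for k
    using primcoll_subset_surface_rays_Un[OF that assms(3), of "{(a, 1), (b, 1)}"] by auto
  ultimately show ?thesis
    by (simp add: is_cone_def)
qed

locale toric_surface =
  fixes p :: "nat \<Rightarrow> nat" and b c :: "nat \<Rightarrow> nat"
    and w :: "nat \<times> nat \<Rightarrow> int ^ 'n"
    and deg :: "(nat \<times> nat) multiset \<Rightarrow> int"
  assumes ppos: "\<forall>k<5. 0 < p k"
    and dim: "CARD('n) + 3 = p 0 + p 1 + p 2 + p 3 + p 4"
    and fan: "smooth_projective_complete_fan p w"
    and rel1: "(\<Sum>i\<in>grp p 0. w i) + (\<Sum>i\<in>grp p 1. w i)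
               = (\<Sum>j\<in>{2..p 2}. int (c j) *s w (2, j)) + (\<Sum>j\<in>{1..p 3}. int (b j + 1) *s w (3, j))"
    and rel2: "(\<Sum>i\<in>grp p 1. w i) + (\<Sum>i\<in>grp p 2. w i) = (\<Sum>i\<in>grp p 4. w i)"
    and rel3: "(\<Sum>i\<in>grp p 2. w i) + (\<Sum>i\<in>grp p 3. w i) = 0"
    and degX: "toric_degree p w deg"
begin

definition isect :: "nat \<times> nat \<Rightarrow> nat \<times> nat \<Rightarrow> int" where
  "isect x y = deg (mset_set (surface_rays p) + {#x, y#})"

lemma isect_commute: "isect x y = isect y x"
  by (simp add: isect_def add_mset_commute)

lemma p_pos: "0 < p 0" "0 < p 1" "0 < p 2" "0 < p 3" "0 < p 4"
  using ppos by (simp_all add: all_less_5)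

lemma first_ray_in_Rays: "k < 5 \<Longrightarrow> (k, 1) \<in> Rays p"
  using ppos by (simp add: mem_Rays Suc_le_eq)

lemma card_surface_rays: "card (surface_rays p) + 2 = CARD('n)"
  using dim p_pos by (simp add: surface_rays_Sigma eval_nat_numeral)

lemma isect_first_rays:
  assumes "k < 5" "l < 5" "k \<noteq> l"
  shows "isect (k, 1) (l, 1) = of_bool (\<forall>i<5. \<not> {i, (i + 1) mod 5} \<subseteq> {k, l})"
proof -
  let ?C = "surface_rays p \<union> {(k, 1), (l, 1)}"
  have mset_C: "mset_set (surface_rays p) + {#(k, 1), (l, 1)#} = mset_set ?C"
    using assms by (simp add: mset_set_Union)
  have card_C: "card ?C = CARD('n)"
    using assms card_surface_rays by simp
  have "deg (mset_set ?C) = of_bool (is_cone p ?C)"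
  proof (cases "is_cone p ?C")
    case True
    then show ?thesis
      using degX card_C unfolding toric_degree_def by simp
  next
    case False
    moreover have "?C \<subseteq> Rays p"
      using assms ppos surface_rays_subset_Rays by (auto simp: mem_Rays)
    ultimately show ?thesis
      using degX card_C unfolding toric_degree_def by simp
  qed
  then show ?thesis
    unfolding isect_def mset_C using is_cone_surface_rays_Un[OF assms(1,2) ppos] by simp
qed

lemma isect_linear_relation:
  assumes "x \<in> Rays p"
  shows "(\<Sum>l\<in>Rays p. idot u (w l) * isect x l) = 0"
proof -
  have "size (mset_set (surface_rays p) + {#x#}) + 1 = CARD('n)"
    using card_surface_rays by simp
  moreover have "set_mset (mset_set (surface_rays p) + {#x#}) \<subseteq> Rays p"
    using assms surface_rays_subset_Rays by auto
  ultimately show ?thesis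
    using degX unfolding toric_degree_def isect_def by (simp add: add_mset_commute)
qed

text \<open>Works because \<open>S\<^sub>1\<close> with \<open>v\<^sub>1, z\<^sub>1\<close> spans a maximal smooth cone (groups 0 and 2 are not
  adjacent), whose rays form a \<open>\<int>\<close>-basis.\<close>
lemma exists_functional_with_values:
  "\<exists>u. (\<forall>l\<in>surface_rays p. idot u (w l) = f l) \<and> idot u (w (0, 1)) = a0 \<and> idot u (w (2, 1)) = a2"
proof -
  let ?C = "surface_rays p \<union> {(0, 1), (2, 1)}"
  define g where "g l = (if l = (0, 1) then a0 else if l = (2, 1) then a2 else f l)" for l
  have smooth: "\<forall>C. is_cone p C \<and> card C = CARD('n) \<longrightarrow>
      (\<forall>x :: int ^ 'n. \<exists>a. x = (\<Sum>i\<in>C. a i *s w i)) \<and>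
      (\<forall>a. (\<Sum>i\<in>C. a i *s w i) = 0 \<longrightarrow> (\<forall>i\<in>C. a i = 0))"
    using fan unfolding smooth_projective_complete_fan_def by (elim conjE) assumption
  have "is_cone p ?C"
    using is_cone_surface_rays_Un[of 0 2 p] ppos by (simp add: all_less_5)
  moreover have "card ?C = CARD('n)"
    using card_surface_rays by simp
  ultimately have basis: "(\<forall>x :: int ^ 'n. \<exists>a. x = (\<Sum>i\<in>?C. a i *s w i))
      \<and> (\<forall>a. (\<Sum>i\<in>?C. a i *s w i) = 0 \<longrightarrow> (\<forall>i\<in>?C. a i = 0))"
    using smooth by blast
  have "finite ?C"
    by simp
  then obtain u where u: "\<forall>l\<in>?C. idot u (w l) = g l"
    using exists_idot_on_basis[of ?C w g] basis by blast
  have "\<forall>l\<in>surface_rays p. idot u (w l) = f l"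
    using u by (auto simp: g_def)
  moreover have "idot u (w (0, 1)) = a0" "idot u (w (2, 1)) = a2"
    using u by (simp_all add: g_def)
  ultimately show ?thesis
    by blast
qed

lemma isect_first_rays_table:
  "isect (0, 1) (1, 1) = 0" "isect (1, 1) (2, 1) = 0" "isect (2, 1) (3, 1) = 0"
  "isect (3, 1) (4, 1) = 0" "isect (0, 1) (4, 1) = 0"
  "isect (0, 1) (2, 1) = 1" "isect (0, 1) (3, 1) = 1" "isect (1, 1) (3, 1) = 1"
  "isect (1, 1) (4, 1) = 1" "isect (2, 1) (4, 1) = 1"
  using isect_first_rays[of 0 1] isect_first_rays[of 1 2] isect_first_rays[of 2 3]
    isect_first_rays[of 3 4] isect_first_rays[of 0 4] isect_first_rays[of 0 2]
    isect_first_rays[of 0 3] isect_first_rays[of 1 3] isect_first_rays[of 1 4]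
    isect_first_rays[of 2 4]
  by (simp_all add: all_less_5)

lemmas isect_first_rays_table_sym =
  isect_first_rays_table isect_first_rays_table[THEN trans[OF isect_commute]]

context
  fixes u :: "int ^ 'n" and e :: "nat \<times> nat \<Rightarrow> int"
  assumes on_surface: "\<forall>l\<in>surface_rays p. idot u (w l) = e l"
begin

lemma idot_tail: "k < 5 \<Longrightarrow> (\<Sum>j\<in>{2..p k}. f j * idot u (w (k, j))) = (\<Sum>j\<in>{2..p k}. f j * e (k, j))"
  using on_surface by (intro sum.cong) (auto simp: mem_surface_rays)

lemma idot_sum_grp:
  "k < 5 \<Longrightarrow> (\<Sum>i\<in>grp p k. idot u (w i)) = idot u (w (k, 1)) + (\<Sum>j\<in>{2..p k}. e (k, j))"
  using idot_tail[of k "\<lambda>_. 1"] ppos by (simp add: sum_grp_split)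

lemma idot_rel1:
  "idot u (w (0, 1)) + (\<Sum>j\<in>{2..p 0}. e (0, j)) + idot u (w (1, 1)) + (\<Sum>j\<in>{2..p 1}. e (1, j))
    = (\<Sum>j\<in>{2..p 2}. int (c j) * e (2, j)) + int (b 1 + 1) * idot u (w (3, 1))
      + (\<Sum>j\<in>{2..p 3}. int (b j + 1) * e (3, j))"
proof -
  have "{1..p 3} = insert 1 {2..p 3}"
    using p_pos by auto
  moreover note arg_cong[OF rel1, of "idot u", unfolded idot_add idot_sum idot_smult]
  ultimately show ?thesis
    by (simp add: idot_sum_grp idot_tail add.assoc)
qed

lemma idot_rel2:
  "idot u (w (1, 1)) + (\<Sum>j\<in>{2..p 1}. e (1, j)) + idot u (w (2, 1)) + (\<Sum>j\<in>{2..p 2}. e (2, j))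
    = idot u (w (4, 1)) + (\<Sum>j\<in>{2..p 4}. e (4, j))"
  using arg_cong[OF rel2, of "idot u"] by (simp add: idot_add idot_sum idot_sum_grp add.assoc)

lemma idot_rel3:
  "idot u (w (2, 1)) + (\<Sum>j\<in>{2..p 2}. e (2, j)) + idot u (w (3, 1)) + (\<Sum>j\<in>{2..p 3}. e (3, j)) = 0"
  using arg_cong[OF rel3, of "idot u"] by (simp add: idot_add idot_sum idot_sum_grp add.assoc)

lemma isect_relation:
  assumes "x \<in> Rays p"
  shows "(\<Sum>l\<in>surface_rays p. e l * isect x l) + idot u (w (0, 1)) * isect x (0, 1)
    + idot u (w (1, 1)) * isect x (1, 1) + idot u (w (2, 1)) * isect x (2, 1)
    + idot u (w (3, 1)) * isect x (3, 1) + idot u (w (4, 1)) * isect x (4, 1) = 0"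
  using isect_linear_relation[OF assms, of u] on_surface
  by (simp add: sum_Rays_split[OF ppos] sum_lessThan_5 add.assoc cong: sum.cong)

end

lemma isect_first_ray_self:
  "isect (0, 1) (0, 1) = 0" "isect (1, 1) (1, 1) = -1" "isect (4, 1) (4, 1) = -1"
  "isect (2, 1) (2, 1) = int (b 1)" "isect (3, 1) (3, 1) = - int (b 1) - 1"
proof -
  obtain u where u: "\<forall>l\<in>surface_rays p. idot u (w l) = 0"
    and u0: "idot u (w (0, 1)) = 1" and u2: "idot u (w (2, 1)) = 0"
    using exists_functional_with_values[of "\<lambda>_. 0" 1 0] by blast
  have u3: "idot u (w (3, 1)) = 0"
    using idot_rel3[of u "\<lambda>_. 0"] u u2 by simp
  have u1: "idot u (w (1, 1)) = -1"
    using idot_rel1[of u "\<lambda>_. 0"] u u0 u3 by simp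
  have u4: "idot u (w (4, 1)) = -1"
    using idot_rel2[of u "\<lambda>_. 0"] u u1 u2 by simp
  note rel = isect_relation[of u "\<lambda>_. 0", OF u first_ray_in_Rays]
  show "isect (0, 1) (0, 1) = 0" "isect (1, 1) (1, 1) = -1" "isect (4, 1) (4, 1) = -1"
    using rel[of 0] rel[of 1] rel[of 4] u0 u1 u2 u3 u4 isect_first_rays_table_sym by simp_all
next
  obtain u where u: "\<forall>l\<in>surface_rays p. idot u (w l) = 0"
    and u0: "idot u (w (0, 1)) = 0" and u2: "idot u (w (2, 1)) = 1"
    using exists_functional_with_values[of "\<lambda>_. 0" 0 1] by blast
  have u3: "idot u (w (3, 1)) = -1"
    using idot_rel3[of u "\<lambda>_. 0"] u u2 by simp
  have u1: "idot u (w (1, 1)) = - int (b 1) - 1"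
    using idot_rel1[of u "\<lambda>_. 0"] u u0 u3 by simp
  have u4: "idot u (w (4, 1)) = - int (b 1)"
    using idot_rel2[of u "\<lambda>_. 0"] u u1 u2 by simp
  note rel = isect_relation[of u "\<lambda>_. 0", OF u first_ray_in_Rays]
  show "isect (2, 1) (2, 1) = int (b 1)" "isect (3, 1) (3, 1) = - int (b 1) - 1"
    using rel[of 2] rel[of 3] u0 u1 u2 u3 u4 isect_first_rays_table_sym by simp_all
qed

lemma isect_self_by_dual_functional:
  assumes i: "(k, j) \<in> surface_rays p"
    and u: "\<forall>l\<in>surface_rays p. idot u (w l) = of_bool (l = (k, j))"
    and u0: "idot u (w (0, 1)) = 0" and u2: "idot u (w (2, 1)) = 0"
  defines "Y \<equiv> idot u (w (1, 1))" and "T \<equiv> idot u (w (3, 1))" and "U \<equiv> idot u (w (4, 1))"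
  shows "isect (k, j) (k, j) = 2 * T * Y - (Y - U)\<^sup>2 - (int (b 1) + 1) * T\<^sup>2"
proof -
  have sum_delta: "(\<Sum>l\<in>surface_rays p. of_bool (l = (k, j)) * isect x l) = isect x (k, j)" for x
    using i by simp
  have rel: "isect x (k, j) + Y * isect x (1, 1) + T * isect x (3, 1) + U * isect x (4, 1) = 0"
    if "x \<in> Rays p" for x
    using isect_relation[OF u that, unfolded sum_delta] u0 u2 by (simp add: Y_def T_def U_def)
  have q1: "isect (1, 1) (k, j) = Y - T - U"
    using rel[OF first_ray_in_Rays[of 1]] isect_first_ray_self isect_first_rays_table_sym by simp
  have "isect (3, 1) (k, j) + Y + T * (- int (b 1) - 1) = 0"
    using rel[OF first_ray_in_Rays[of 3]] isect_first_ray_self isect_first_rays_table_sym by simp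
  then have q3: "isect (3, 1) (k, j) = (int (b 1) + 1) * T - Y"
    by (simp add: algebra_simps)
  have q4: "isect (4, 1) (k, j) = U - Y"
    using rel[OF first_ray_in_Rays[of 4]] isect_first_ray_self isect_first_rays_table_sym by simp
  have "(k, j) \<in> Rays p"
    using i surface_rays_subset_Rays by blast
  from rel[OF this, unfolded isect_commute[of "(k, j)" "(1, 1)"]
      isect_commute[of "(k, j)" "(3, 1)"] isect_commute[of "(k, j)" "(4, 1)"]]
  have "isect (k, j) (k, j)
      = - (Y * isect (1, 1) (k, j) + T * isect (3, 1) (k, j) + U * isect (4, 1) (k, j))"
    by linarith
  also have "\<dots> = 2 * T * Y - (Y - U)\<^sup>2 - (int (b 1) + 1) * T\<^sup>2"
    unfolding q1 q3 q4 by (simp add: power2_eq_square algebra_simps)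
  finally show ?thesis .
qed

lemma dual_functional_relations:
  assumes i: "(k, j) \<in> surface_rays p"
    and u: "\<forall>l\<in>surface_rays p. idot u (w l) = of_bool (l = (k, j))"
    and u0: "idot u (w (0, 1)) = 0" and u2: "idot u (w (2, 1)) = 0"
  defines "Y \<equiv> idot u (w (1, 1))" and "T \<equiv> idot u (w (3, 1))" and "U \<equiv> idot u (w (4, 1))"
  shows "of_bool (k = 0) + Y + of_bool (k = 1)
      = of_bool (k = 2) * int (c j) + (int (b 1) + 1) * T + of_bool (k = 3) * (int (b j) + 1)"
    and "Y + of_bool (k = 1) + of_bool (k = 2) = U + of_bool (k = 4)"
    and "of_bool (k = 2) + T + of_bool (k = 3) = 0"
proof -
  have tail: "(\<Sum>j'\<in>{2..p k'}. f j' * of_bool ((k', j') = (k, j))) = (if k' = k then f j else 0)"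
    for k' and f :: "nat \<Rightarrow> int"
    using i by (cases "k' = k") (auto simp: mem_surface_rays)
  have tail1: "(\<Sum>j'\<in>{2..p k'}. of_bool ((k', j') = (k, j))) = (if k' = k then 1 else 0 :: int)" for k'
    using tail[where f = "\<lambda>_. 1"] by simp
  show "of_bool (k = 0) + Y + of_bool (k = 1)
      = of_bool (k = 2) * int (c j) + (int (b 1) + 1) * T + of_bool (k = 3) * (int (b j) + 1)"
    using idot_rel1[OF u, unfolded tail tail1] u0 by (simp add: Y_def T_def split: if_splits)
  show "Y + of_bool (k = 1) + of_bool (k = 2) = U + of_bool (k = 4)"
    using idot_rel2[OF u, unfolded tail1] u2 by (simp add: Y_def U_def split: if_splits)
  show "of_bool (k = 2) + T + of_bool (k = 3) = 0"
    using idot_rel3[OF u, unfolded tail1] u2 by (simp add: T_def split: if_splits)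
qed

lemma isect_surface_ray_self:
  assumes i: "(k, j) \<in> surface_rays p"
  shows "isect (k, j) (k, j) = (if k = 2 then int (b 1) - 2 * int (c j)
    else if k = 3 then int (b 1) - 2 * int (b j) - 1 else if k = 0 then 0 else -1)"
proof -
  obtain u where u: "\<forall>l\<in>surface_rays p. idot u (w l) = of_bool (l = (k, j))"
    and u0: "idot u (w (0, 1)) = 0" and u2: "idot u (w (2, 1)) = 0"
    using exists_functional_with_values[of "\<lambda>l. of_bool (l = (k, j))" 0 0] by blast
  define Y T U where "Y = idot u (w (1, 1))" and "T = idot u (w (3, 1))" and "U = idot u (w (4, 1))"
  note rel = dual_functional_relations[OF i u u0 u2, folded Y_def T_def U_def]
  note self = isect_self_by_dual_functional[OF i u u0 u2, folded Y_def T_def U_def]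
  have "k < 5"
    using i by (simp add: mem_surface_rays)
  then consider "k = 0" | "k = 1" | "k = 2" | "k = 3" | "k = 4"
    by linarith
  then show ?thesis
  proof cases
    case 1
    then have "T = 0" "Y = -1" "U = -1" using rel by simp_all
    then show ?thesis using 1 self by simp
  next
    case 2
    then have "T = 0" "Y = -1" "U = 0" using rel by simp_all
    then show ?thesis using 2 self by simp
  next
    case 3
    have T: "T = -1" using rel(3) 3 by simp
    have Y: "Y = int (c j) - int (b 1) - 1" using rel(1) 3 T by simp
    have U: "U = int (c j) - int (b 1)" using rel(2) 3 Y by simp
    show ?thesis using 3 self unfolding T Y U by (simp add: power2_eq_square algebra_simps)
  next
    case 4
    have T: "T = -1" using rel(3) 4 by simp
    have Y: "Y = int (b j) - int (b 1)" using rel(1) 4 T by simp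
    have U: "U = int (b j) - int (b 1)" using rel(2) 4 Y by simp
    show ?thesis using 4 self unfolding T Y U by (simp add: power2_eq_square algebra_simps)
  next
    case 5
    then have "T = 0" "Y = 0" "U = -1" using rel by simp_all
    then show ?thesis using 5 self by simp
  qed
qed

lemma sum_isect_self:
  "(\<Sum>i\<in>Rays p. isect i i)
    = - int (p 1) - int (p 4) + int (b 1) * int (p 2) - 2 * (\<Sum>j\<in>{2..p 2}. int (c j))
      - (int (b 1) + 1) + (\<Sum>i\<in>{2..p 3}. int (b 1) - 2 * int (b i) - 1)"
proof -
  have surface: "(\<Sum>j\<in>{2..p k}. isect (k, j) (k, j))
      = (\<Sum>j\<in>{2..p k}. if k = 2 then int (b 1) - 2 * int (c j)
         else if k = 3 then int (b 1) - 2 * int (b j) - 1 else if k = 0 then 0 else -1)" if "k < 5" for k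
    using that by (intro sum.cong) (simp_all add: isect_surface_ray_self mem_surface_rays)
  have "(\<Sum>i\<in>Rays p. isect i i) = (\<Sum>i\<in>surface_rays p. isect i i) + (\<Sum>k<5. isect (k, 1) (k, 1))"
    by (rule sum_Rays_split[OF ppos])
  also have "(\<Sum>k<5. isect (k, 1) (k, 1)) = -3"
    unfolding sum_lessThan_5 using isect_first_ray_self by simp
  also have "(\<Sum>i\<in>surface_rays p. isect i i) = (\<Sum>k<5. \<Sum>j\<in>{2..p k}. isect (k, j) (k, j))"
    unfolding surface_rays_Sigma by (simp add: sum.Sigma split_beta)
  also have "\<dots> = - int (p 1 - 1) + (int (b 1) * int (p 2 - 1) - 2 * (\<Sum>j\<in>{2..p 2}. int (c j)))
      + (\<Sum>j\<in>{2..p 3}. int (b 1) - 2 * int (b j) - 1) - int (p 4 - 1)"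
    by (simp add: surface sum_lessThan_5 sum_subtractf sum_distrib_left)
  finally show ?thesis
    using p_pos by (simp add: of_nat_diff algebra_simps)
qed

end

theorem mainTheorem4:
  fixes p :: "nat \<Rightarrow> nat" and b c :: "nat \<Rightarrow> nat"
    and w :: "nat \<times> nat \<Rightarrow> int ^ 'n"
    and deg :: "(nat \<times> nat) multiset \<Rightarrow> int"
  assumes ppos: "\<forall>k<5. 0 < p k"
    and dim: "CARD('n) + 3 = p 0 + p 1 + p 2 + p 3 + p 4"
    and fan: "smooth_projective_complete_fan p w"
    and rel1: "(\<Sum>i\<in>grp p 0. w i) + (\<Sum>i\<in>grp p 1. w i)
               = (\<Sum>j\<in>{2..p 2}. int (c j) *s w (2, j)) + (\<Sum>j\<in>{1..p 3}. int (b j + 1) *s w (3, j))"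
    and rel2: "(\<Sum>i\<in>grp p 1. w i) + (\<Sum>i\<in>grp p 2. w i) = (\<Sum>i\<in>grp p 4. w i)"
    and rel3: "(\<Sum>i\<in>grp p 2. w i) + (\<Sum>i\<in>grp p 3. w i) = 0"
    and rel4: "(\<Sum>i\<in>grp p 3. w i) + (\<Sum>i\<in>grp p 4. w i) = (\<Sum>i\<in>grp p 1. w i)"
    and rel5: "(\<Sum>i\<in>grp p 4. w i) + (\<Sum>i\<in>grp p 0. w i)
               = (\<Sum>j\<in>{2..p 2}. int (c j) *s w (2, j)) + (\<Sum>j\<in>{1..p 3}. int (b j) *s w (3, j))"
    and cmin: "\<forall>j\<in>{2..p 2}. c 2 \<le> c j"
    and bmin: "\<forall>i\<in>{1..p 3}. b 1 \<le> b i"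
    and degX: "toric_degree p w deg"
  shows "(\<Sum>i\<in>Rays p. deg (mset_set (Rays p - {(k, 1) | k. k < 5}) + {#i, i#}))
         = - int (p 1) - int (p 4) + int (b 1) * int (p 2) - 2 * (\<Sum>j\<in>{2..p 2}. int (c j))
           - (int (b 1) + 1) + (\<Sum>i\<in>{2..p 3}. int (b 1) - 2 * int (b i) - 1)"
proof -
  interpret toric_surface p b c w deg
    using ppos dim fan rel1 rel2 rel3 degX by unfold_locales
  show ?thesis
    using sum_isect_self unfolding isect_def surface_rays_def .
qed

end
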